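(* Let $\Lambda$ be an even unimodular lattice, $a\in\mathfrak h=\Lambda\otimes\mathbb Q_p$ with $\langle a,a\rangle=1$, and $r,t$ odd integers with $t\ge1$, $r\ge3$. Then in $V_\Lambda$, setting $v_{r,t}=(r-1)!\,a[-r]a[-1]^t\mathbf 1$, $$v_{r,t}=\sum_{n\ge0}\sum_{k\ge0}\binom t{2k}\frac{n!\,S_r^{(n+1)}(2k)!}{k!(-24)^k}a(-n-1)a(-1)^{t-2k}\mathbf 1-\sum_{k\ge0}\binom t{2k+1}\frac{B_{r+1}(2k+1)!}{k!(r+1)(-24)^k}a(-1)^{t-2k-1}\mathbf 1,$$ where $S_r^{(n+1)}=\frac1{n!}\sum_{j\ge0}\binom nj(-1)^{n+j}(j+1)^{r-1}$.
   Context: $V_\Lambda=S_{\mathrm{alg}}\otimes\mathbb Q_p\{\Lambda\}$ is the lattice VOA of $\Lambda$, where $S_{\mathrm{alg}}$ is the Heisenberg VOA on $\mathfrak h$ (polynomials in $b(-n)$, $b\in\mathfrak h$, $n\ge1$, with $[b(m),c(n)]=m\langle b,c\rangle\delta_{m+n,0}$), identified with $S_{\mathrm{alg}}\otimes e^0$; $b(n)$ for $n\neq0$ acts on the first tensor factor and $b(0)$ acts on $s\otimes e^\alpha$ by $\langle b,\alpha\rangle$. Square-bracket modes: $b[n]=\mathrm{Res}_w\,b(w)(\log(1+w))^n$ with $b(w)=\sum_m b(m)w^{-m-1}$; products mean successive application to $\mathbf 1$. $B_m$ are the Bernoulli numbers. *)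

theory Defs
  imports "HOL-Analysis.Analysis" "HOL-Library.Poly_Mapping" "HOL-Library.Function_Algebras"
    "HOL-Computational_Algebra.Formal_Laurent_Series"
begin

text \<open>The lattice Lambda has Z-basis indexed by the finite type 'n with Gram matrix G.
  h = Lambda (x) k has coordinates 'n => k (k a field of characteristic 0, standing in for Q_p).
  V_Lambda = S_alg (x) k{Lambda} has the basis vectors (alpha, mu), alpha in Lambda = ('n => int),
  mu a monomial in the variables x_(i,m) = e_i(-(m+1)) (i in 'n, m >= 0); the basis vector
  (alpha, mu) is mu (x) e^alpha.\<close>

type_synonym 'n vbasis = "('n \<Rightarrow> int) \<times> (('n \<times> nat) \<Rightarrow>\<^sub>0 nat)"
type_synonym ('n, 'k) vvec = "'n vbasis \<Rightarrow> 'k"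

definition latform :: "int^'n^'n \<Rightarrow> ('n::finite \<Rightarrow> 'k::field_char_0) \<Rightarrow> ('n \<Rightarrow> 'k) \<Rightarrow> 'k" where
  "latform G b c = (\<Sum>i\<in>UNIV. \<Sum>j\<in>UNIV. b i * of_int (G$i$j) * c j)"

definition even_unimodular_lattice :: "int^'n^'n \<Rightarrow> bool" where
  "even_unimodular_lattice G \<longleftrightarrow>
     transpose G = G \<and> (\<forall>i. even (G$i$i)) \<and> \<bar>det G\<bar> = 1 \<and>
     (\<forall>x::'n::finite \<Rightarrow> int. x \<noteq> 0 \<longrightarrow> 0 < (\<Sum>i\<in>UNIV. \<Sum>j\<in>UNIV. x i * G$i$j * x j))"

definition scal :: "'k::field \<Rightarrow> ('b \<Rightarrow> 'k) \<Rightarrow> ('b \<Rightarrow> 'k)" where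
  "scal c v = (\<lambda>x. c * v x)"

definition mulvar :: "'n \<times> nat \<Rightarrow> ('n, 'k::field) vvec \<Rightarrow> ('n, 'k) vvec" where
  "mulvar im v = (\<lambda>(\<alpha>, \<mu>). if 0 < Poly_Mapping.lookup \<mu> im then v (\<alpha>, \<mu> - Poly_Mapping.single im 1) else 0)"

definition dervar :: "'n \<times> nat \<Rightarrow> ('n, 'k::field) vvec \<Rightarrow> ('n, 'k) vvec" where
  "dervar im v = (\<lambda>(\<alpha>, \<mu>). of_nat (Poly_Mapping.lookup \<mu> im + 1) * v (\<alpha>, \<mu> + Poly_Mapping.single im 1))"

definition hmode :: "int^'n^'n \<Rightarrow> ('n::finite \<Rightarrow> 'k::field_char_0) \<Rightarrow> int \<Rightarrow> ('n, 'k) vvec \<Rightarrow> ('n, 'k) vvec" where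
  "hmode G b m v =
     (if m < 0 then (\<lambda>x. \<Sum>i\<in>UNIV. b i * mulvar (i, nat (- m) - 1) v x)
      else if m = 0 then (\<lambda>(\<alpha>, \<mu>). latform G b (\<lambda>j. of_int (\<alpha> j)) * v (\<alpha>, \<mu>))
      else (\<lambda>x. of_int m * (\<Sum>j\<in>UNIV. latform G b (\<lambda>l. if l = j then 1 else 0) * dervar (j, nat m - 1) v x)))"

definition vac :: "('n, 'k::field) vvec" where
  "vac = (\<lambda>x. if x = (0, 0) then 1 else 0)"

definition fin_sum :: "('i \<Rightarrow> 'a::comm_monoid_add) \<Rightarrow> 'a" where
  "fin_sum f = sum f {i. f i \<noteq> 0}"

definition logser :: "'k::field_char_0 fls" where
  "logser = fps_to_fls (fps_ln 1)"

text \<open>Square-bracket modes b[n] = Res_w b(w) (log(1+w))^n = sum_m (coeff of w^m in log(1+w)^n) b(m).\<close>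
definition sqmode :: "int^'n^'n \<Rightarrow> ('n::finite \<Rightarrow> 'k::field_char_0) \<Rightarrow> int \<Rightarrow> ('n, 'k) vvec \<Rightarrow> ('n, 'k) vvec" where
  "sqmode G b n v = fin_sum (\<lambda>m::int. scal (fls_nth (logser powi n) m) (hmode G b m v))"

definition bernoulli_num :: "nat \<Rightarrow> 'k::field_char_0" where
  "bernoulli_num n = fact n * ((fps_X / (fps_exp 1 - 1)) $ n)"

definition stirlS :: "nat \<Rightarrow> nat \<Rightarrow> 'k::field_char_0" where
  "stirlS r n = (1 / fact n) * (\<Sum>j\<le>n. of_nat (n choose j) * (-1) ^ (n + j) * of_nat (j + 1) ^ (r - 1))"

end

theory Submission
  imports Defs
begin

text \<open>Write \<open>a[n] = \<Sum>\<^sub>m c(n,m) a(m)\<close> with \<open>c(n,m)\<close> the coefficient of \<open>w\<^sup>m\<close> in \<open>log(1+w)\<^sup>n\<close>.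
  As a residue, \<open>c(n,m)\<close> turns under the substitution \<open>w = e\<^sup>z - 1\<close> into a coefficient of
  \<open>(e\<^sup>z - 1)\<^sup>-\<^sup>m\<^sup>-\<^sup>1 e\<^sup>z z\<^sup>n\<close>; for \<open>n = -r\<close> this gives \<open>(r-1)! c(-r,-j-1) = j! S\<^sub>r\<^sup>(\<^sup>j\<^sup>+\<^sup>1\<^sup>)\<close>, and
  \<open>(r-1)! c(-r,1) = -B\<^sub>r\<^sub>+\<^sub>1/(r+1)\<close> through the generating function \<open>z/(e\<^sup>z - 1)\<close>.
  On the states \<open>a(-1)\<^sup>j \<one>\<close> the modes \<open>a(m)\<close>, \<open>m \<ge> 0\<close>, act only through
  \<open>a(1) a(-1)\<^sup>j \<one> = j a(-1)\<^sup>j\<^sup>-\<^sup>1 \<one>\<close>, so there \<open>a[-1] = a(-1) - a(1)/12\<close>, and induction on \<open>t\<close>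
  expands \<open>a[-1]\<^sup>t \<one>\<close> as a sum over partial pairings of the \<open>t\<close> factors, each pair contributing
  \<open>-1/12\<close>. Applying \<open>(r-1)! a[-r]\<close> to this expansion gives the formula.\<close>

section \<open>Residues of Laurent series under a change of variables\<close>

lemma fls_deriv_powi:
  fixes h :: "'k::field fls"
  assumes "h \<noteq> 0"
  shows "fls_deriv (h powi n) = of_int n * h powi (n - 1) * fls_deriv h"
proof (cases n rule: int_cases)
  case (nonneg m)
  show ?thesis
  proof (cases m)
    case (Suc k)
    have "h powi n = h ^ Suc k" "h powi (n - 1) = h ^ k" "of_int n = (of_nat (Suc k) :: 'k fls)"
      using nonneg Suc by (simp_all only: power_int_of_nat) simp_all
    then show ?thesis using fls_deriv_power[of h "Suc k"] by (simp only: diff_Suc_1)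
  qed (simp add: nonneg)
next
  case (neg m)
  have "n - 1 = - int (Suc (Suc m))" using neg by simp
  then have e1: "h powi n = inverse (h ^ Suc m)" and e2: "h powi (n - 1) = inverse (h ^ Suc (Suc m))"
    using neg by (simp_all only: power_int_minus power_int_of_nat)
  have "h ^ Suc (Suc m) * h ^ m = h ^ Suc m * h ^ Suc m"
    by (simp flip: power_add)
  then show ?thesis unfolding e1 e2 fls_inverse_deriv fls_deriv_power unfolding neg using assms
    by (simp add: field_simps power2_eq_square)
qed

lemma fls_residue_powi_times_deriv:
  fixes H :: "'k::field_char_0 fps"
  assumes "H $ 0 = 0" and "H $ 1 \<noteq> 0"
  shows "fls_residue (fps_to_fls H powi d * fls_deriv (fps_to_fls H)) = (if d = -1 then 1 else 0)"
proof -
  define h where "h = fps_to_fls H"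
  have "subdegree H = 1" using assms by (intro subdegreeI) (auto simp: less_Suc_eq)
  then have h: "h \<noteq> 0" "fls_subdegree h = 1"
    using assms by (auto simp: h_def fls_subdegree_fls_to_fps)
  show ?thesis
  proof (cases "d = -1")
    case True
    then show ?thesis
      using fls_residue_deriv_times_inverse_eq_subdegree(2)[of h] h by (simp add: h_def power_int_minus)
  next
    case False
    then have "of_int (d + 1) \<noteq> (0 :: 'k fls)"
      by (simp only: of_int_eq_0_iff)
    then have "h powi d * fls_deriv h = fls_deriv (fls_const (1 / of_int (d + 1)) * h powi (d + 1))"
      using h by (simp add: fls_deriv_powi fls_const_divide_const fls_of_int field_simps)
    then show ?thesis using False by (simp only: h_def fls_residue_deriv) simp
  qed
qed

lemma fls_residue_compose_fps_times_deriv: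
  fixes H :: "'k::field_char_0 fps" and F :: "'k fls"
  assumes H0: "H $ 0 = 0" and H1: "H $ 1 \<noteq> 0"
  shows "fls_residue (fls_compose_fps F H * fls_deriv (fps_to_fls H)) = fls_residue F"
proof -
  have H: "H \<noteq> 0" using H1 by auto
  have "fls_residue (fls_compose_fps F H * fls_deriv (fps_to_fls H)) = fls_residue F"
    if "F = 0 \<or> - int k \<le> fls_subdegree F" for k F
    using that
  proof (induction k arbitrary: F)
    case 0
    then have "F = fps_to_fls (fls_regpart F)" by auto
    then have "fls_compose_fps F H * fls_deriv (fps_to_fls H) = fps_to_fls ((fls_regpart F oo H) * fps_deriv H)"
      using H0 H by (metis fls_compose_fps_to_fls fls_deriv_fps_to_fls fls_times_fps_to_fls)
    then show ?case using 0 by auto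
  next
    case (Suc k)
    define c where "c = fls_nth F (- int k - 1)"
    define F' where "F' = F - fls_const c * fls_X_intpow (- int k - 1)"
    have "fls_nth F' j = 0" if "j < - int k" for j
      using that Suc.prems by (cases "j = - int k - 1") (auto simp: F'_def c_def)
    then have "F' = 0 \<or> - int k \<le> fls_subdegree F'"
      using fls_subdegree_geI[of F' "- int k"] by blast
    note IH = Suc.IH[OF this]
    have F: "F = F' + fls_const c * fls_X_intpow (- int k - 1)" by (simp add: F'_def)
    have "fls_compose_fps F H = fls_compose_fps F' H + fls_const c * fps_to_fls H powi (- int k - 1)"
      unfolding F using fls_compose_fps_powi[OF H H0, of fls_X "- int k - 1"] H H0
      by (simp add: fls_compose_fps_add fls_compose_fps_mult)
    then have "fls_residue (fls_compose_fps F H * fls_deriv (fps_to_fls H)) =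
        fls_residue F' + c * fls_residue (fps_to_fls H powi (- int k - 1) * fls_deriv (fps_to_fls H))"
      using IH by (simp add: distrib_right fls_residue_add mult.assoc fls_residue_fls_const_times)
    also have "\<dots> = fls_residue (F' + fls_const c * fls_X_intpow (- int k - 1))"
      unfolding fls_residue_powi_times_deriv[OF H0 H1]
      by (simp only: fls_residue_add fls_residue_fls_const_times fls_residue_fls_X_intpow)
    finally show ?case by (simp only: F)
  qed
  from this[of F "nat (- fls_subdegree F)"] show ?thesis by auto
qed

section \<open>Coefficients of powers of \<open>log(1+w)\<close>\<close>

abbreviation fps_expm1 :: "'k::field_char_0 fps" where
  "fps_expm1 \<equiv> fps_exp 1 - 1"

lemma fps_expm1_nonzero: "(fps_expm1 :: 'k::field_char_0 fps) \<noteq> 0"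
proof -
  have "(fps_expm1 :: 'k fps) $ 1 = 1" by simp
  then show ?thesis by auto
qed

lemma subdegree_fps_expm1: "subdegree (fps_expm1 :: 'k::field_char_0 fps) = 1"
  by (rule subdegreeI) (auto simp: less_Suc_eq)

lemma logser_compose_fps_expm1: "fls_compose_fps (logser :: 'k::field_char_0 fls) fps_expm1 = fls_X"
proof -
  have "fps_ln 1 oo fps_expm1 = (fps_X :: 'k fps)"
    using fps_ln_fps_exp_inv[of "1::'k"] fps_inv_fps_exp_compose(1)[of "1::'k"] by simp
  then show ?thesis
    using fps_expm1_nonzero by (simp add: logser_def)
qed

text \<open>Substituting \<open>w = e\<^sup>z - 1\<close> turns \<open>log(1+w)\<close> into \<open>z\<close> and \<open>dw\<close> into \<open>e\<^sup>z dz\<close>.\<close>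

lemma logser_powi_nth_eq_residue:
  "fls_nth ((logser :: 'k::field_char_0 fls) powi n) m =
   fls_residue (fps_to_fls fps_expm1 powi (- m - 1) * fls_X_intpow n * fps_to_fls (fps_exp 1))"
proof -
  have "fls_nth (logser powi n) m = fls_residue (fls_X_intpow (- m - 1) * (logser :: 'k fls) powi n)"
    by (rule fls_residue_shift_nth)
  also have "\<dots> = fls_residue (fls_compose_fps (fls_X_intpow (- m - 1) * logser powi n) fps_expm1
                     * fls_deriv (fps_to_fls fps_expm1))"
    by (rule fls_residue_compose_fps_times_deriv[symmetric]) simp_all
  also have "fls_compose_fps (fls_X_intpow (- m - 1) * (logser :: 'k fls) powi n) fps_expm1 =
      fps_to_fls fps_expm1 powi (- m - 1) * fls_X_intpow n"
  proof -
    have H0: "(fps_expm1 :: 'k fps) $ 0 = 0" by simp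
    have "fls_compose_fps (fls_X_intpow j) fps_expm1 = fps_to_fls (fps_expm1 :: 'k fps) powi j" for j
      using fls_compose_fps_powi[OF fps_expm1_nonzero H0, of fls_X j]
      by (simp only: fls_X_power_int fls_compose_fps_X)
    then show ?thesis
      by (simp only: fls_compose_fps_mult[OF fps_expm1_nonzero H0]
          fls_compose_fps_powi[OF fps_expm1_nonzero H0] logser_compose_fps_expm1 fls_X_power_int)
  qed
  finally show ?thesis by (simp add: fls_deriv_fps_to_fls)
qed

lemma fls_residue_fps_times_X_intpow:
  fixes f :: "'a::comm_ring_1 fps"
  assumes "r \<ge> 1"
  shows "fls_residue (fps_to_fls f * fls_X_intpow (- int r)) = f $ (r - 1)"
proof -
  have "fps_to_fls f * fls_X_intpow (- int r) = fls_shift (int r) (fps_to_fls f)"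
    using fls_shifted_times_simps(1)[of "fps_to_fls f" "int r" 1] by simp
  then show ?thesis using assms by (simp add: nat_diff_distrib)
qed

lemma fps_expm1_power_times_exp:
  "fps_expm1 ^ j * fps_exp 1 =
    (\<Sum>i\<le>j. fps_const (of_nat (j choose i) * (-1) ^ (j - i)) * fps_exp (of_nat i + 1 :: 'k::field_char_0))"
proof -
  have "(fps_expm1 :: 'k fps) ^ j = (\<Sum>i\<le>j. of_nat (j choose i) * fps_exp 1 ^ i * (-1) ^ (j - i))"
    using binomial_ring[of "fps_exp (1::'k)" "-1" j] by simp
  moreover have "of_nat (j choose i) * fps_exp 1 ^ i * (-1) ^ (j - i) * fps_exp 1 =
      fps_const (of_nat (j choose i) * (-1) ^ (j - i)) * fps_exp (of_nat i + 1 :: 'k)" for i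
  proof -
    have "(-1 :: 'k fps) = fps_const (-1)" by simp
    then have "(-1 :: 'k fps) ^ (j - i) = fps_const ((-1) ^ (j - i))"
      by (simp only: fps_const_power)
    then show ?thesis
      by (simp add: fps_exp_power_mult fps_exp_add_mult fps_of_nat mult_ac flip: fps_const_mult)
  qed
  ultimately show ?thesis by (simp add: sum_distrib_right)
qed

lemma logser_powi_neg_nth_neg:
  assumes "r \<ge> 1"
  shows "fact (r - 1) * fls_nth ((logser :: 'k::field_char_0 fls) powi (- int r)) (- int j - 1) =
    (\<Sum>i\<le>j. of_nat (j choose i) * (-1) ^ (j - i) * of_nat (i + 1) ^ (r - 1))"
proof -
  have "fls_nth ((logser :: 'k fls) powi (- int r)) (- int j - 1) =
      fls_residue (fps_to_fls (fps_expm1 ^ j * fps_exp 1) * fls_X_intpow (- int r))"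
    unfolding logser_powi_nth_eq_residue
    by (simp add: fps_to_fls_power fls_times_fps_to_fls mult_ac power_int_of_nat)
  also have "\<dots> = (fps_expm1 ^ j * fps_exp (1::'k)) $ (r - 1)"
    using assms by (rule fls_residue_fps_times_X_intpow)
  also have "\<dots> = (\<Sum>i\<le>j. of_nat (j choose i) * (-1) ^ (j - i) * of_nat (i + 1) ^ (r - 1) / fact (r - 1))"
    unfolding fps_expm1_power_times_exp fps_sum_nth by (simp add: add.commute)
  finally show ?thesis by (simp add: sum_distrib_left)
qed

lemma fact_times_logser_powi_nth_eq_stirlS:
  assumes "r \<ge> 1"
  shows "fact (r - 1) * fls_nth ((logser :: 'k::field_char_0 fls) powi (- int r)) (- int n - 1) =
    fact n * stirlS r n"
proof -
  have "(-1 :: 'k) ^ (n - i) = (-1) ^ (n + i)" if "i \<le> n" for i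
  proof -
    have "n + i = (n - i) + 2 * i" using that by simp
    then have "(-1 :: 'k) ^ (n + i) = (-1) ^ (n - i) * ((-1) ^ 2) ^ i"
      by (simp only: power_add power_mult)
    then show ?thesis by simp
  qed
  then show ?thesis
    unfolding logser_powi_neg_nth_neg[OF assms] stirlS_def by (simp add: sum_distrib_left)
qed

lemma fls_subdegree_logser: "fls_subdegree (logser :: 'k::field_char_0 fls) = 1"
proof -
  have "subdegree (fps_ln 1 :: 'k fps) = 1"
    by (rule subdegreeI) (auto simp: fps_ln_nth less_Suc_eq)
  then show ?thesis by (simp add: logser_def fls_subdegree_fls_to_fps)
qed

lemma logser_powi_nth_below:
  assumes "m < n"
  shows "fls_nth ((logser :: 'k::field_char_0 fls) powi n) m = 0"
  using assms by (intro fls_eq0_below_subdegree) (simp add: fls_subdegree_logser)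

lemma stirlS_eq_0:
  assumes "1 \<le> r" "r \<le> n"
  shows "(stirlS r n :: 'k::field_char_0) = 0"
  using fact_times_logser_powi_nth_eq_stirlS[OF assms(1), of n, where 'k='k]
    logser_powi_nth_below[of "- int n - 1" "- int r", where 'k='k] assms
  by simp

lemma fps_expm1_times_bernoulli_fps:
  "fps_expm1 * (fps_X / fps_expm1) = (fps_X :: 'k::field_char_0 fps)"
proof -
  have "subdegree (fps_expm1 :: 'k fps) \<le> subdegree (fps_X :: 'k fps)"
    unfolding subdegree_fps_expm1 by simp
  then have "(fps_expm1 :: 'k fps) dvd fps_X"
    using fps_dvd_iff[of "fps_expm1 :: 'k fps" fps_X] fps_expm1_nonzero by simp
  then show ?thesis by (simp add: mult.commute)
qed

lemma inverse_fps_expm1: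
  "inverse (fps_to_fls fps_expm1) = fps_to_fls (fps_X / fps_expm1) * (fls_shift 1 1 :: 'k::field_char_0 fls)"
proof (rule inverse_unique)
  have "fps_to_fls fps_expm1 * fps_to_fls (fps_X / fps_expm1) = (fls_X :: 'k fls)"
    by (simp only: fls_times_fps_to_fls[symmetric] fps_expm1_times_bernoulli_fps fps_X_to_fls)
  then show "fps_to_fls fps_expm1 * (fps_to_fls (fps_X / fps_expm1) * fls_shift 1 1) = (1 :: 'k fls)"
    by (simp add: mult.assoc[symmetric] fls_shifted_times_simps)
qed

lemma bernoulli_num_eq_nth:
  "bernoulli_num n / fact n = ((fps_X / fps_expm1 :: 'k::field_char_0 fps) $ n)"
  by (simp add: bernoulli_num_def)

lemma fact_times_logser_powi_neg_nth_one:
  assumes "r \<ge> 1"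
  shows "fact (r - 1) * fls_nth ((logser :: 'k::field_char_0 fls) powi (- int r)) 1 =
     - bernoulli_num (r + 1) / of_nat (r + 1)"
proof -
  define ie where "ie = inverse (fps_to_fls (fps_expm1 :: 'k fps))"
  have "fls_nth ((logser :: 'k fls) powi (- int r)) 1 =
      fls_residue (ie ^ 2 * fls_X_intpow (- int r) * fps_to_fls (fps_exp 1))"
    unfolding logser_powi_nth_eq_residue ie_def by (simp add: power_int_minus power_inverse)
  also have "\<dots> = fls_residue (- (fls_deriv ie * fls_X_intpow (- int r)))"
    unfolding ie_def fls_inverse_deriv by (simp add: fls_deriv_fps_to_fls algebra_simps)
  also have "\<dots> = fls_residue (ie * fls_deriv (fls_X_intpow (- int r)))"
    using fls_residue_times_deriv[of ie "fls_X_intpow (- int r)"] by simp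
  also have "ie * fls_deriv (fls_X_intpow (- int r)) =
      fls_const (- of_nat r) * (fps_to_fls (fps_X / fps_expm1) * fls_X_intpow (- int (r + 2)))"
    unfolding fls_deriv_X_intpow ie_def inverse_fps_expm1
    by (simp add: fls_shifted_times_simps fls_of_int algebra_simps)
  also have "fls_residue \<dots> = - of_nat r * (fps_X / fps_expm1) $ (r + 1)"
    using fls_residue_fps_times_X_intpow[of "r + 2" "fps_X / fps_expm1 :: 'k fps"]
    by (simp add: fls_residue_fls_const_times)
  finally have "fls_nth ((logser :: 'k fls) powi (- int r)) 1 = - of_nat r * (bernoulli_num (r + 1) / fact (r + 1))"
    by (simp only: bernoulli_num_eq_nth)
  moreover have "fact (r + 1) = (of_nat (r + 1) * (of_nat r * fact (r - 1)) :: 'k)"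
    using fact_reduce[of r, where 'a='k] assms by simp
  moreover have "F * (- R * (B / (R1 * (R * F)))) = - B / R1"
    if "F \<noteq> 0" "R \<noteq> 0" "R1 \<noteq> 0" for F R R1 B :: 'k
    using that by (simp add: field_simps)
  moreover have "(of_nat r :: 'k) \<noteq> 0" using assms by simp
  moreover have "(of_nat (r + 1) :: 'k) \<noteq> 0" by (simp only: of_nat_eq_0_iff)
  ultimately show ?thesis by (simp only:) simp
qed

lemma bernoulli_fps_nth_2: "(fps_X / fps_expm1 :: 'k::field_char_0 fps) $ 2 = 1 / 12"
proof -
  define B where "B = (fps_X / fps_expm1 :: 'k fps)"
  have eq: "fps_expm1 * B = fps_X" unfolding B_def by (rule fps_expm1_times_bernoulli_fps)
  have "(fps_expm1 * B) $ 1 = 1" "(fps_expm1 * B) $ 2 = 0" "(fps_expm1 * B) $ 3 = 0"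
    unfolding eq by simp_all
  then have b0: "B $ 0 = 1" and b1: "1 + 2 * B $ 1 = 0" and b2: "1 + 3 * B $ 1 + 6 * B $ 2 = 0"
    by (simp_all add: fps_mult_nth numeral_3_eq_3 numeral_2_eq_2 atMost_Suc field_simps)
  from b1 have "B $ 1 = - 1 / 2" by (simp add: field_simps eq_neg_iff_add_eq_0 add.commute)
  with b2 have "1 + 3 * (- 1 / 2) + 6 * B $ 2 = (0 :: 'k)" by simp
  then have "B $ 2 = ((1 + 3 * (- 1 / 2) + 6 * B $ 2) + 1 / 2) / 6" by (simp add: field_simps)
  also note \<open>1 + 3 * (- 1 / 2) + 6 * B $ 2 = 0\<close>
  finally show ?thesis unfolding B_def by simp
qed

lemma logser_inverse_nth_neg_one: "fls_nth ((logser :: 'k::field_char_0 fls) powi (-1)) (-1) = 1"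
  using logser_powi_neg_nth_neg[of 1 0, where 'k='k] by simp

lemma logser_inverse_nth_one: "fls_nth ((logser :: 'k::field_char_0 fls) powi (-1)) 1 = - 1 / 12"
  using fact_times_logser_powi_neg_nth_one[of 1, where 'k='k] bernoulli_fps_nth_2[where 'k='k]
  by (simp add: bernoulli_num_def numeral_2_eq_2)

section \<open>Heisenberg modes\<close>

lemma sum_fun_apply: "(\<Sum>i\<in>S. f i) x = (\<Sum>i\<in>S. f i x)"
  by (induction S rule: infinite_finite_induct) auto

lemma scal_0_left [simp]: "scal 0 v = 0"
  and scal_0_right [simp]: "scal c 0 = 0"
  and scal_1 [simp]: "scal 1 v = v"
  and scal_scal [simp]: "scal c (scal d v) = scal (c * d) v"
  and scal_add_right: "scal c (v + w) = scal c v + scal c w"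
  and scal_add_left: "scal (c + d) v = scal c v + scal d v"
  and scal_minus_left: "scal (- c) v = - scal c v"
  and scal_diff_left: "scal (c - d) v = scal c v - scal d v"
  by (simp_all add: scal_def fun_eq_iff algebra_simps)

lemma scal_sum_right: "scal c (\<Sum>i\<in>S. f i) = (\<Sum>i\<in>S. scal c (f i))"
  by (simp add: scal_def fun_eq_iff sum_fun_apply sum_distrib_left)

lemma fin_sum_eq_sum:
  assumes "finite S" and "\<And>i. i \<notin> S \<Longrightarrow> f i = 0"
  shows "fin_sum f = sum f S"
  unfolding fin_sum_def by (rule sum.mono_neutral_left) (use assms in auto)

lemma mulvar_lincomb: "mulvar k (\<lambda>x. \<Sum>i\<in>S. c i * f i x) = (\<lambda>x. \<Sum>i\<in>S. c i * mulvar k (f i) x)"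
  by (auto simp: mulvar_def fun_eq_iff)

lemma dervar_lincomb: "dervar k (\<lambda>x. \<Sum>i\<in>S. c i * f i x) = (\<lambda>x. \<Sum>i\<in>S. c i * dervar k (f i) x)"
  by (auto simp: dervar_def fun_eq_iff sum_distrib_left mult_ac)

lemma dervar_mulvar:
  "dervar k (mulvar l v) x = mulvar l (dervar k v) x + (if k = l then v x else 0)"
proof -
  obtain \<alpha> \<mu> where x: "x = (\<alpha>, \<mu>)" by (cases x)
  show ?thesis
  proof (cases "k = l")
    case True
    show ?thesis
    proof (cases "0 < Poly_Mapping.lookup \<mu> l")
      case pos: True
      have "\<mu> - Poly_Mapping.single l 1 + Poly_Mapping.single l 1 = \<mu>"
        by (rule poly_mapping_eqI) (use pos in \<open>auto simp: lookup_add lookup_minus lookup_single when_def\<close>)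
      moreover have "Poly_Mapping.lookup \<mu> l = Poly_Mapping.lookup (\<mu> - Poly_Mapping.single l 1) l + 1"
        using pos by (simp add: lookup_minus lookup_single)
      ultimately show ?thesis using pos
        by (simp add: x True mulvar_def dervar_def lookup_add lookup_single algebra_simps)
    qed (simp add: x True mulvar_def dervar_def lookup_add lookup_single)
  next
    case False
    have "\<mu> + Poly_Mapping.single k 1 - Poly_Mapping.single l 1 =
        \<mu> - Poly_Mapping.single l 1 + Poly_Mapping.single k 1"
      by (rule poly_mapping_eqI) (use False in \<open>auto simp: lookup_add lookup_minus lookup_single when_def\<close>)
    then show ?thesis
      using False by (simp add: x mulvar_def dervar_def lookup_add lookup_minus lookup_single)
  qed
qed

lemma hmode_neg:
  "n > 0 \<Longrightarrow> hmode G b (- n) v = (\<lambda>x. \<Sum>i\<in>UNIV. b i * mulvar (i, nat n - 1) v x)"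
  by (simp add: hmode_def)

lemma hmode_pos:
  "m > 0 \<Longrightarrow> hmode G b m v =
    (\<lambda>x. \<Sum>j\<in>UNIV. (of_int m * latform G b (\<lambda>l. if l = j then 1 else 0)) * dervar (j, nat m - 1) v x)"
  by (simp add: hmode_def sum_distrib_left mult_ac)

lemma hmode_add: "hmode G b m (v + w) = hmode G b m v + hmode G b m w"
proof -
  have "mulvar k (v + w) = mulvar k v + mulvar k w" "dervar k (v + w) = dervar k v + dervar k w" for k
    by (auto simp: mulvar_def dervar_def fun_eq_iff algebra_simps)
  note add = this
  show ?thesis by (auto simp: hmode_def fun_eq_iff add algebra_simps sum.distrib)
qed

lemma hmode_scal: "hmode G b m (scal c v) = scal c (hmode G b m v)"
proof -
  have "mulvar k (scal c v) = scal c (mulvar k v)" "dervar k (scal c v) = scal c (dervar k v)" for k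
    by (auto simp: mulvar_def dervar_def scal_def fun_eq_iff algebra_simps)
  note scal = this
  show ?thesis unfolding hmode_def scal by (auto simp: fun_eq_iff scal_def algebra_simps sum_distrib_left)
qed

lemma hmode_0_right [simp]: "hmode G b m 0 = 0"
  using hmode_scal[of G b m 0 0] by simp

lemma hmode_0_right' [simp]: "hmode G b m (\<lambda>x. 0) = (\<lambda>x. 0)"
  using hmode_0_right unfolding zero_fun_def .

lemma hmode_sum: "hmode G b m (\<Sum>i\<in>S. f i) = (\<Sum>i\<in>S. hmode G b m (f i))"
proof (induction S rule: infinite_finite_induct)
  case (insert x F)
  have "hmode G b m (sum f (insert x F)) = hmode G b m (f x) + hmode G b m (sum f F)"
    using sum.insert[OF insert(1,2), of f] by (simp only: hmode_add)
  then show ?case using insert.IH by (simp only: sum.insert[OF insert(1,2)])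
next
  case (infinite A)
  then show ?case by (simp only: sum.infinite[OF infinite] hmode_0_right)
qed (simp only: sum.empty hmode_0_right)

lemma sum_latform_basis:
  "(\<Sum>j\<in>UNIV. latform G b (\<lambda>l. if l = j then 1 else 0) * c j) = latform G (b :: 'n::finite \<Rightarrow> 'k::field_char_0) c"
proof -
  have "latform G b (\<lambda>l. if l = j then 1 else 0) = (\<Sum>i\<in>UNIV. b i * of_int (G$i$j))" for j
    unfolding latform_def by (simp add: if_distrib cong: if_cong)
  then have "(\<Sum>j\<in>UNIV. latform G b (\<lambda>l. if l = j then 1 else 0) * c j) =
      (\<Sum>j\<in>UNIV. \<Sum>i\<in>UNIV. b i * of_int (G$i$j) * c j)"
    by (simp add: sum_distrib_right)
  also have "\<dots> = latform G b c" unfolding latform_def by (rule sum.swap)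
  finally show ?thesis .
qed

text \<open>\<open>[b(m), c(-n)] = m \<langle>b,c\<rangle> \<delta>(m,n)\<close>: the only contribution comes from the derivation
  \<open>dervar (j, m-1)\<close> hitting the variable \<open>x(i, n-1)\<close> just multiplied in.\<close>

lemma hmode_pos_hmode_neg:
  fixes G :: "int^'n::finite^'n" and b c :: "'n \<Rightarrow> 'k::field_char_0"
  assumes "m > 0" and "n > 0"
  shows "hmode G b m (hmode G c (- n) v) =
    hmode G c (- n) (hmode G b m v) + (if m = n then scal (of_int m * latform G b c) v else 0)"
proof -
  define p q where "p = nat m - 1" and "q = nat n - 1"
  define d where "d j = of_int m * latform G b (\<lambda>l. if l = j then 1 else 0)" for j
  have "hmode G b m (hmode G c (- n) v) =
      (\<lambda>x. \<Sum>j\<in>UNIV. d j * (\<Sum>i\<in>UNIV. c i * dervar (j, p) (mulvar (i, q) v) x))"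
    using assms by (simp add: hmode_pos hmode_neg dervar_lincomb d_def p_def q_def)
  also have "\<dots> = (\<lambda>x. \<Sum>j\<in>UNIV. \<Sum>i\<in>UNIV. d j * c i * mulvar (i, q) (dervar (j, p) v) x) +
      (\<lambda>x. \<Sum>j\<in>UNIV. \<Sum>i\<in>UNIV. d j * c i * (if (j, p) = (i, q) then v x else 0))"
    by (simp add: dervar_mulvar fun_eq_iff distrib_left sum.distrib sum_distrib_left mult_ac)
  also have "(\<lambda>x. \<Sum>j\<in>UNIV. \<Sum>i\<in>UNIV. d j * c i * mulvar (i, q) (dervar (j, p) v) x) =
      hmode G c (- n) (hmode G b m v)"
  proof -
    have "hmode G c (- n) (hmode G b m v) =
        (\<lambda>x. \<Sum>i\<in>UNIV. \<Sum>j\<in>UNIV. d j * c i * mulvar (i, q) (dervar (j, p) v) x)"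
      unfolding hmode_pos[OF assms(1)] hmode_neg[OF assms(2)] mulvar_lincomb
      by (simp add: d_def p_def q_def sum_distrib_left mult_ac)
    then show ?thesis by (simp only:) (rule ext, rule sum.swap)
  qed
  also have "(\<lambda>x. \<Sum>j\<in>UNIV. \<Sum>i\<in>UNIV. d j * c i * (if (j, p) = (i, q) then v x else 0)) =
      (if m = n then scal (of_int m * latform G b c) v else 0)"
  proof -
    have "p = q \<longleftrightarrow> m = n" using assms by (auto simp: p_def q_def)
    moreover have "(\<Sum>j\<in>UNIV. d j * c j) = of_int m * (\<Sum>j\<in>UNIV. latform G b (\<lambda>l. if l = j then 1 else 0) * c j)"
      by (simp add: d_def sum_distrib_left mult_ac)
    then have "(\<Sum>j\<in>UNIV. d j * c j) = of_int m * latform G b c"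
      by (simp only: sum_latform_basis)
    ultimately show ?thesis
      by (auto simp: fun_eq_iff scal_def if_distrib sum_distrib_right[symmetric] cong: if_cong)
  qed
  finally show ?thesis .
qed

lemma hmode_0_hmode_neg:
  assumes "n > 0"
  shows "hmode G b 0 (hmode G c (- n) v) = hmode G c (- n) (hmode G b 0 v)"
  using assms by (auto simp: hmode_def mulvar_def fun_eq_iff sum_distrib_left mult_ac if_distrib cong: if_cong)

lemma hmode_vac:
  fixes G :: "int^'n::finite^'n"
  assumes "m \<ge> 0"
  shows "hmode G b m vac = 0"
proof -
  have "\<mu> + Poly_Mapping.single k 1 \<noteq> 0" for \<mu> :: "'n \<times> nat \<Rightarrow>\<^sub>0 nat" and k
  proof
    assume "\<mu> + Poly_Mapping.single k 1 = 0"
    then have "Poly_Mapping.lookup (\<mu> + Poly_Mapping.single k 1) k = 0" by simp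
    then show False by (simp add: lookup_add)
  qed
  then show ?thesis
    using assms by (auto simp: hmode_def dervar_def vac_def latform_def fun_eq_iff)
qed

section \<open>The states \<open>a[-1]\<^sup>t \<one>\<close>\<close>

definition hpow_vac :: "int^'n^'n \<Rightarrow> ('n::finite \<Rightarrow> 'k::field_char_0) \<Rightarrow> nat \<Rightarrow> ('n, 'k) vvec" where
  "hpow_vac G a j = (hmode G a (-1) ^^ j) vac"

lemma hpow_vac_0 [simp]: "hpow_vac G a 0 = vac"
  and hpow_vac_Suc: "hpow_vac G a (Suc j) = hmode G a (-1) (hpow_vac G a j)"
  by (simp_all add: hpow_vac_def)

lemma hmode_hpow_vac_ge_2:
  assumes "m \<ge> 2"
  shows "hmode G b m (hpow_vac G a j) = 0"
proof (induction j)
  case (Suc j)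
  then show ?case
    using hmode_pos_hmode_neg[of m 1 G b a "hpow_vac G a j"] assms by (simp add: hpow_vac_Suc)
qed (use assms in \<open>simp add: hmode_vac\<close>)

lemma hmode_0_hpow_vac: "hmode G b 0 (hpow_vac G a j) = 0"
proof (induction j)
  case (Suc j)
  then show ?case using hmode_0_hmode_neg[of 1 G b a "hpow_vac G a j"] by (simp add: hpow_vac_Suc)
qed (simp add: hmode_vac)

lemma hmode_1_hpow_vac:
  "hmode G b 1 (hpow_vac G a j) = scal (of_nat j * latform G b a) (hpow_vac G a (j - 1))"
proof (induction j)
  case (Suc j)
  have "hmode G b 1 (hpow_vac G a (Suc j)) =
      hmode G a (-1) (hmode G b 1 (hpow_vac G a j)) + scal (latform G b a) (hpow_vac G a j)"
    using hmode_pos_hmode_neg[of 1 1 G b a "hpow_vac G a j"] by (simp add: hpow_vac_Suc)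
  also have "\<dots> = scal (of_nat (Suc j) * latform G b a) (hpow_vac G a j)"
    using Suc by (cases j) (simp_all add: hmode_scal hpow_vac_Suc zero_fun_def scal_add_left[symmetric] algebra_simps)
  finally show ?case by simp
qed (simp add: hmode_vac)

text \<open>\<open>binom t (2k) (2k)!/(k! 2\<^sup>k)\<close> counts the ways to choose \<open>k\<close> disjoint pairs among \<open>t\<close> factors,
  and each pair carries \<open>-1/12\<close>, the coefficient of \<open>w\<close> in \<open>log(1+w)\<^sup>-\<^sup>1\<close>.\<close>

definition pairing_coeff :: "nat \<Rightarrow> nat \<Rightarrow> 'k::field_char_0" where
  "pairing_coeff t k = of_nat (t choose (2*k)) * fact (2*k) / (fact k * (-24) ^ k)"

lemma choose_Suc_times_Suc: "(n choose Suc k) * Suc k = (n choose k) * (n - k)"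
  using binomial_absorption[of k n] binomial_absorb_comp[of n k] by (simp add: mult_ac)

lemma pairing_coeff_0_right [simp]: "pairing_coeff t 0 = 1"
  by (simp add: pairing_coeff_def)

lemma pairing_coeff_eq_0: "t < 2 * k \<Longrightarrow> pairing_coeff t k = 0"
  by (simp add: pairing_coeff_def)

lemma pairing_coeff_times_diff:
  "pairing_coeff t k * of_nat (t - 2*k) =
    (of_nat (t choose (2*k+1)) * fact (2*k+1) / (fact k * (-24) ^ k) :: 'k::field_char_0)"
proof -
  have "of_nat (t choose (2*k)) * of_nat (t - 2*k) = (of_nat (t choose (2*k+1)) * of_nat (2*k+1) :: 'k)"
    using choose_Suc_times_Suc[of t "2*k"] by (simp only: of_nat_mult[symmetric]) simp
  then show ?thesis by (simp add: pairing_coeff_def)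
qed

lemma pairing_coeff_Suc_Suc:
  "(pairing_coeff (Suc t) (Suc k) :: 'k::field_char_0) =
    pairing_coeff t (Suc k) - 1/12 * (pairing_coeff t k * of_nat (t - 2*k))"
proof -
  have e: "2 * Suc k = Suc (Suc (2*k))" by simp
  have "(pairing_coeff (Suc t) (Suc k) :: 'k) = pairing_coeff t (Suc k) +
      of_nat (t choose Suc (2*k)) * (fact (Suc (Suc (2*k))) / (fact (Suc k) * (-24) ^ Suc k))"
    unfolding pairing_coeff_def e binomial_Suc_Suc
    by (simp add: add_divide_distrib distrib_right del: fact_Suc power_Suc)
  also have "fact (Suc (Suc (2*k))) / (fact (Suc k) * (-24) ^ Suc k) =
      - 1/12 * (fact (Suc (2*k)) / (fact k * (-24) ^ k) :: 'k)"
  proof -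
    have ratio: "K2 * F / (K * D * (-24 * P)) = - 1/12 * (F / (D * P))"
      if "K2 = 2 * K" "K \<noteq> 0" "D \<noteq> 0" "P \<noteq> 0" for K2 K D P F :: 'k
      using that by (simp add: field_simps)
    have "fact (Suc (Suc (2*k))) / (fact (Suc k) * (-24) ^ Suc k) = (of_nat (Suc (Suc (2*k))) * fact (Suc (2*k)) /
        (of_nat (Suc k) * fact k * (-24 * (-24) ^ k)) :: 'k)"
      by (simp only: fact_Suc[of "Suc (2*k)"] fact_Suc[of k] power_Suc mult.assoc)
    also have "\<dots> = - 1/12 * (fact (Suc (2*k)) / (fact k * (-24) ^ k))"
      by (rule ratio) (simp_all only: of_nat_eq_0_iff fact_nonzero power_not_zero, simp_all)
    finally show ?thesis .
  qed
  finally show ?thesis unfolding pairing_coeff_times_diff by (simp add: mult_ac)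
qed

lemma sqmode_eq_sum:
  fixes G :: "int^'n::finite^'n" and b :: "'n \<Rightarrow> 'k::field_char_0"
  assumes "\<And>m. m \<ge> 2 \<Longrightarrow> hmode G b m v = 0"
  shows "sqmode G b n v = (\<Sum>m\<in>{n..1}. scal (fls_nth (logser powi n) m) (hmode G b m v))"
  unfolding sqmode_def
proof (rule fin_sum_eq_sum)
  fix m assume "m \<notin> {n..1}"
  then have "m < n \<or> m \<ge> 2" by auto
  then show "scal (fls_nth (logser powi n) m) (hmode G b m v) = 0"
    using assms logser_powi_nth_below[of m n, where 'k='k] by auto
qed simp

definition sqpow_vac_expansion :: "int^'n^'n \<Rightarrow> ('n::finite \<Rightarrow> 'k::field_char_0) \<Rightarrow> nat \<Rightarrow> ('n, 'k) vvec" where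
  "sqpow_vac_expansion G a t = (\<Sum>k\<le>t. scal (pairing_coeff t k) (hpow_vac G a (t - 2*k)))"

lemma hmode_sqpow_vac_expansion:
  "hmode G b m (sqpow_vac_expansion G a t) = (\<Sum>k\<le>t. scal (pairing_coeff t k) (hmode G b m (hpow_vac G a (t - 2*k))))"
  unfolding sqpow_vac_expansion_def hmode_sum hmode_scal ..

lemma sqmode_neg_1_sqpow_vac_expansion:
  fixes G :: "int^'n::finite^'n" and a :: "'n \<Rightarrow> 'k::field_char_0"
  assumes "latform G a a = 1"
  shows "sqmode G a (-1) (sqpow_vac_expansion G a t) = sqpow_vac_expansion G a (Suc t)"
proof -
  let ?Y = "sqpow_vac_expansion G a t"
  have "sqmode G a (-1) ?Y = (\<Sum>m\<in>{-1, 0, 1}. scal (fls_nth (logser powi (-1)) m) (hmode G a m ?Y))"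
  proof -
    have "{-1..1::int} = {-1, 0, 1}" by auto
    then show ?thesis
      using sqmode_eq_sum[of G a ?Y "-1"] by (simp add: hmode_sqpow_vac_expansion hmode_hpow_vac_ge_2)
  qed
  also have "\<dots> = hmode G a (-1) ?Y - scal (1/12) (hmode G a 1 ?Y)"
    using logser_inverse_nth_neg_one[where 'k='k] logser_inverse_nth_one[where 'k='k]
    by (simp add: hmode_sqpow_vac_expansion hmode_0_hpow_vac scal_minus_left)
  also have "hmode G a (-1) ?Y = (\<Sum>k\<le>Suc t. scal (pairing_coeff t k) (hpow_vac G a (Suc t - 2*k)))"
  proof -
    have "scal (pairing_coeff t k) (hpow_vac G a (Suc (t - 2*k))) =
        scal (pairing_coeff t k) (hpow_vac G a (Suc t - 2*k))" for k
      by (cases "2 * k \<le> t") (simp_all add: Suc_diff_le pairing_coeff_eq_0)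
    then show ?thesis
      unfolding hmode_sqpow_vac_expansion hpow_vac_Suc[symmetric] by (simp add: pairing_coeff_eq_0)
  qed
  also have "hmode G a 1 ?Y =
      (\<Sum>k\<le>t. scal (pairing_coeff t k * of_nat (t - 2*k)) (hpow_vac G a (Suc t - 2 * Suc k)))"
    unfolding hmode_sqpow_vac_expansion hmode_1_hpow_vac assms by (simp add: mult.commute)
  also have "(\<Sum>k\<le>Suc t. scal (pairing_coeff t k) (hpow_vac G a (Suc t - 2*k))) -
      scal (1/12) (\<Sum>k\<le>t. scal (pairing_coeff t k * of_nat (t - 2*k)) (hpow_vac G a (Suc t - 2 * Suc k))) =
      sqpow_vac_expansion G a (Suc t)"
    unfolding sqpow_vac_expansion_def sum.atMost_Suc_shift pairing_coeff_Suc_Suc scal_sum_right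
    by (simp add: scal_add_left scal_diff_left sum.distrib sum_subtractf)
  finally show ?thesis .
qed

lemma sqmode_neg_1_pow_vac:
  fixes G :: "int^'n::finite^'n" and a :: "'n \<Rightarrow> 'k::field_char_0"
  assumes "latform G a a = 1"
  shows "(sqmode G a (-1) ^^ t) vac = sqpow_vac_expansion G a t"
proof (induction t)
  case 0
  show ?case by (simp add: sqpow_vac_expansion_def)
next
  case (Suc t)
  then show ?case by (simp add: sqmode_neg_1_sqpow_vac_expansion[OF assms])
qed

lemma fact_scal_sqmode_neg:
  fixes G :: "int^'n::finite^'n" and b :: "'n \<Rightarrow> 'k::field_char_0"
  assumes r: "r \<ge> 1" and "\<And>m. m \<ge> 2 \<Longrightarrow> hmode G b m v = 0" and "hmode G b 0 v = 0"
  shows "scal (fact (r - 1)) (sqmode G b (- int r) v) =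
    (\<Sum>n<r. scal (fact n * stirlS r n) (hmode G b (- int n - 1) v)) -
    scal (bernoulli_num (r + 1) / of_nat (r + 1)) (hmode G b 1 v)"
proof -
  let ?c = "\<lambda>m. fls_nth ((logser :: 'k fls) powi (- int r)) m"
  have "{- int r..1} = insert 1 (insert 0 ((\<lambda>n. - int n - 1) ` {..<r}))"
  proof (intro set_eqI iffI)
    fix x assume x: "x \<in> {- int r..1}"
    show "x \<in> insert 1 (insert 0 ((\<lambda>n. - int n - 1) ` {..<r}))"
    proof (cases "x \<ge> 0")
      case False
      then have "x = - int (nat (- x - 1)) - 1" "nat (- x - 1) < r" using x by auto
      then show ?thesis by blast
    qed (use x in auto)
  qed auto
  moreover have "inj_on (\<lambda>n. - int n - 1) {..<r}" by (auto simp: inj_on_def)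
  moreover have "(1::int) \<notin> insert 0 ((\<lambda>n. - int n - 1) ` {..<r})" "(0::int) \<notin> (\<lambda>n. - int n - 1) ` {..<r}"
    by auto
  ultimately have "sqmode G b (- int r) v =
      scal (?c 1) (hmode G b 1 v) + (\<Sum>n<r. scal (?c (- int n - 1)) (hmode G b (- int n - 1) v))"
    using sqmode_eq_sum[of G b v "- int r", OF assms(2)] assms(3) by (simp add: sum.reindex)
  then show ?thesis
    using fact_times_logser_powi_nth_eq_stirlS[OF r, where 'k='k]
      fact_times_logser_powi_neg_nth_one[OF r, where 'k='k]
    by (simp add: scal_add_right scal_sum_right scal_minus_left)
qed

theorem mainTheorem9:
  fixes G :: "int^'n::finite^'n" and a :: "'n \<Rightarrow> 'k::field_char_0" and r t :: nat
  assumes "even_unimodular_lattice G"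
    and "latform G a a = 1"
    and "odd r" and "odd t" and "t \<ge> 1" and "r \<ge> 3"
  shows "scal (fact (r - 1)) (sqmode G a (- int r) ((sqmode G a (-1) ^^ t) vac)) =
     fin_sum (\<lambda>n::nat. fin_sum (\<lambda>k::nat.
        scal (of_nat (t choose (2*k)) * fact n * stirlS r n * fact (2*k) / (fact k * (-24) ^ k))
          (hmode G a (- int n - 1) ((hmode G a (-1) ^^ (t - 2*k)) vac))))
   - fin_sum (\<lambda>k::nat.
        scal (of_nat (t choose (2*k+1)) * bernoulli_num (r + 1) * fact (2*k+1)
                / (fact k * of_nat (r + 1) * (-24) ^ k))
          ((hmode G a (-1) ^^ (t - 2*k - 1)) vac))"
proof -
  have r: "r \<ge> 1" using \<open>r \<ge> 3\<close> by simp
  let ?Y = "sqpow_vac_expansion G a t"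
  have "scal (fact (r - 1)) (sqmode G a (- int r) ((sqmode G a (-1) ^^ t) vac)) =
      (\<Sum>n<r. scal (fact n * stirlS r n) (hmode G a (- int n - 1) ?Y)) -
      scal (bernoulli_num (r + 1) / of_nat (r + 1)) (hmode G a 1 ?Y)"
    unfolding sqmode_neg_1_pow_vac[OF assms(2)]
    by (rule fact_scal_sqmode_neg[OF r]) (simp_all add: hmode_sqpow_vac_expansion hmode_hpow_vac_ge_2 hmode_0_hpow_vac)
  also have "(\<Sum>n<r. scal (fact n * stirlS r n) (hmode G a (- int n - 1) ?Y)) =
      (\<Sum>n<r. \<Sum>k\<le>t. scal (of_nat (t choose (2*k)) * fact n * stirlS r n * fact (2*k) / (fact k * (-24) ^ k))
          (hmode G a (- int n - 1) (hpow_vac G a (t - 2*k))))"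
    by (simp add: hmode_sqpow_vac_expansion scal_sum_right pairing_coeff_def mult_ac)
  also have "\<dots> = fin_sum (\<lambda>n::nat. fin_sum (\<lambda>k::nat.
        scal (of_nat (t choose (2*k)) * fact n * stirlS r n * fact (2*k) / (fact k * (-24) ^ k))
          (hmode G a (- int n - 1) ((hmode G a (-1) ^^ (t - 2*k)) vac))))"
    unfolding hpow_vac_def[symmetric]
    by (rule sym, rule fin_sum_eq_sum[of "{..<r}", THEN trans])
      (simp, simp add: fin_sum_def stirlS_eq_0[OF r, where 'k='k],
       rule sum.cong[OF refl], rule fin_sum_eq_sum, auto simp: binomial_eq_0)
  also have "scal (bernoulli_num (r + 1) / of_nat (r + 1)) (hmode G a 1 ?Y) =
      (\<Sum>k\<le>t. scal (of_nat (t choose (2*k+1)) * bernoulli_num (r + 1) * fact (2*k+1)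
                / (fact k * of_nat (r + 1) * (-24) ^ k)) (hpow_vac G a (t - 2*k - 1)))"
    unfolding hmode_sqpow_vac_expansion hmode_1_hpow_vac assms(2) mult_1_right scal_sum_right scal_scal
      pairing_coeff_times_diff
    by (simp add: mult_ac)
  also have "\<dots> = fin_sum (\<lambda>k::nat.
        scal (of_nat (t choose (2*k+1)) * bernoulli_num (r + 1) * fact (2*k+1)
                / (fact k * of_nat (r + 1) * (-24) ^ k))
          ((hmode G a (-1) ^^ (t - 2*k - 1)) vac))"
    unfolding hpow_vac_def[symmetric] by (rule sym, rule fin_sum_eq_sum) (auto simp: binomial_eq_0)
  finally show ?thesis .
qed
end
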